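(* Let $M$ be a unipotent square complex matrix and $k$ a positive integer. Then $F(M)=F(M^k)$, where for a matrix $X$, $F(X)$ denotes the field obtained by adjoining all entries of $X$ to $\mathbb{Q}$.
   Context: A matrix $M$ is unipotent if $M=I+T$ with $T$ nilpotent. *)

theory Defs
  imports "Jordan_Normal_Form.Matrix"
begin

definition nilpotent_mat :: "'a :: semiring_1 mat \<Rightarrow> bool" where
  "nilpotent_mat T \<longleftrightarrow> (\<exists>m. T ^\<^sub>m m = 0\<^sub>m (dim_row T) (dim_col T))"

definition unipotent_mat :: "'a :: ring_1 mat \<Rightarrow> bool" where
  "unipotent_mat M \<longleftrightarrow> (\<exists>T. T \<in> carrier_mat (dim_row M) (dim_row M) \<and>
      nilpotent_mat T \<and> M = 1\<^sub>m (dim_row M) + T)"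

definition is_subfield :: "complex set \<Rightarrow> bool" where
  "is_subfield K \<longleftrightarrow> 0 \<in> K \<and> 1 \<in> K \<and>
     (\<forall>x\<in>K. \<forall>y\<in>K. x + y \<in> K \<and> x * y \<in> K) \<and> (\<forall>x\<in>K. - x \<in> K) \<and>
     (\<forall>x\<in>K. x \<noteq> 0 \<longrightarrow> inverse x \<in> K)"

definition field_adjoin :: "complex set \<Rightarrow> complex set" where
  "field_adjoin S = \<Inter> {K. is_subfield K \<and> S \<subseteq> K}"

definition mat_entries :: "'a mat \<Rightarrow> 'a set" where
  "mat_entries X = {X $$ (i, j) | i j. i < dim_row X \<and> j < dim_col X}"

definition entry_field :: "complex mat \<Rightarrow> complex set" where
  "entry_field X = field_adjoin (mat_entries X)"

end

theory Submission
  imports Defs "HOL-Computational_Algebra.Polynomial"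
begin

text \<open>Write \<open>M = 1 + T\<close> with \<open>T\<close> nilpotent; the inclusion \<open>F(M\<^sup>k) \<subseteq> F(M)\<close> is clear.
  Conversely, \<open>(1 + X)\<^sup>k = 1 + X u\<close> with \<open>u = \<Sum>i<k. (1 + X)\<^sup>i\<close>, a polynomial with
  integer coefficients and \<open>u(0) = k \<noteq> 0\<close>. So \<open>N = T u(T) = M\<^sup>k - 1\<close> has entries in any
  subfield \<open>K\<close> containing those of \<open>M\<^sup>k\<close>, and \<open>N\<^sup>r = k\<^sup>r T\<^sup>r + T\<^bsup>r+1\<^esup> q(T)\<close> with \<open>q\<close> over \<open>K\<close>.
  Descending induction on \<open>r\<close>, starting above the nilpotency index, shows that every
  \<open>T\<^sup>r\<close>, in particular \<open>T\<close>, has entries in \<open>K\<close>.\<close>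

definition poly_mat :: "'a :: comm_ring_1 poly \<Rightarrow> 'a mat \<Rightarrow> 'a mat" where
  "poly_mat p A = foldr (\<lambda>a B. a \<cdot>\<^sub>m 1\<^sub>m (dim_row A) + A * B) (coeffs p)
     (0\<^sub>m (dim_row A) (dim_row A))"

context
  fixes A :: "'a :: comm_ring_1 mat" and n :: nat
  assumes A: "A \<in> carrier_mat n n"
begin

lemma poly_mat_carrier [simp]: "poly_mat p A \<in> carrier_mat n n"
proof -
  have "foldr (\<lambda>a B. a \<cdot>\<^sub>m 1\<^sub>m n + A * B) as (0\<^sub>m n n) \<in> carrier_mat n n" for as
    by (induct as) (use A in auto)
  then show ?thesis
    using A by (simp add: poly_mat_def)
qed

lemma poly_mat_dim [simp]: "dim_row (poly_mat p A) = n" "dim_col (poly_mat p A) = n"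
  by (rule carrier_matD[OF poly_mat_carrier])+

lemma poly_mat_0 [simp]: "poly_mat 0 A = 0\<^sub>m n n"
  using A by (simp add: poly_mat_def)

lemma poly_mat_pCons: "poly_mat (pCons a p) A = a \<cdot>\<^sub>m 1\<^sub>m n + A * poly_mat p A"
proof (cases "a = 0 \<and> p = 0")
  case True
  then show ?thesis
    using A by auto
next
  case False
  then have "coeffs (pCons a p) = a # coeffs p"
    by (auto simp: cCons_def)
  then show ?thesis
    using A by (simp add: poly_mat_def)
qed

lemma poly_mat_add: "poly_mat (p + q) A = poly_mat p A + poly_mat q A"
proof (induct p arbitrary: q rule: pCons_induct)
  case 0
  then show ?case
    using A by simp
next
  case (pCons a p)
  obtain b q' where q: "q = pCons b q'"
    by (cases q)
  have "poly_mat (pCons a p + q) A = (a + b) \<cdot>\<^sub>m 1\<^sub>m n + (A * poly_mat p A + A * poly_mat q' A)"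
    using mult_add_distrib_mat[OF A poly_mat_carrier poly_mat_carrier]
    by (simp add: q poly_mat_pCons pCons.hyps)
  also have "\<dots> = poly_mat (pCons a p) A + poly_mat q A"
    using A by (intro eq_matI) (auto simp: q poly_mat_pCons algebra_simps)
  finally show ?case .
qed

lemma poly_mat_smult: "poly_mat (smult c p) A = c \<cdot>\<^sub>m poly_mat p A"
proof (induct p rule: pCons_induct)
  case (pCons a p)
  have "poly_mat (smult c (pCons a p)) A = (c * a) \<cdot>\<^sub>m 1\<^sub>m n + c \<cdot>\<^sub>m (A * poly_mat p A)"
    using mult_smult_distrib[OF A poly_mat_carrier] by (simp add: poly_mat_pCons pCons.hyps)
  also have "\<dots> = c \<cdot>\<^sub>m poly_mat (pCons a p) A"
    using A by (intro eq_matI) (auto simp: poly_mat_pCons algebra_simps)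
  finally show ?case .
qed (use A in \<open>auto\<close>)

lemma poly_mat_mult: "poly_mat (p * q) A = poly_mat p A * poly_mat q A"
proof (induct p rule: pCons_induct)
  case 0
  then show ?case
    using left_mult_zero_mat[OF poly_mat_carrier] by simp
next
  case (pCons a p)
  have "poly_mat (pCons a p * q) A = a \<cdot>\<^sub>m poly_mat q A + A * (poly_mat p A * poly_mat q A)"
    using A by (simp add: poly_mat_add poly_mat_smult poly_mat_pCons pCons.hyps)
      auto
  also have "\<dots> = (a \<cdot>\<^sub>m 1\<^sub>m n + A * poly_mat p A) * poly_mat q A"
    using A by (simp add: add_mult_distrib_mat[of _ n n _ _ n] assoc_mult_mat[of A n n _ n _ n]
      mult_smult_assoc_mat[of "1\<^sub>m n" n n _ n])
  finally show ?case
    by (simp add: poly_mat_pCons)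
qed

lemma poly_mat_1 [simp]: "poly_mat 1 A = 1\<^sub>m n"
  using A by (auto simp: one_pCons poly_mat_pCons)

lemma poly_mat_x [simp]: "poly_mat [:0, 1:] A = A"
  using A by (auto simp: poly_mat_pCons)

lemma poly_mat_power: "poly_mat (p ^ k) A = poly_mat p A ^\<^sub>m k"
  by (induct k) (simp_all add: poly_mat_mult mult.commute[of p])

end

lemma subfield_sum:
  assumes "is_subfield K" and "\<And>x. x \<in> A \<Longrightarrow> f x \<in> K"
  shows "sum f A \<in> K"
  using assms(2)
  by (induct A rule: infinite_finite_induct) (use assms(1) in \<open>auto simp: is_subfield_def\<close>)

lemma subfield_mult: "is_subfield K \<Longrightarrow> x \<in> K \<Longrightarrow> y \<in> K \<Longrightarrow> x * y \<in> K"
  unfolding is_subfield_def by blast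

lemma subfield_diff: "is_subfield K \<Longrightarrow> x \<in> K \<Longrightarrow> y \<in> K \<Longrightarrow> x - y \<in> K"
  unfolding is_subfield_def by (metis diff_conv_add_uminus)

lemma subfield_divide: "is_subfield K \<Longrightarrow> x \<in> K \<Longrightarrow> y \<in> K \<Longrightarrow> x / y \<in> K"
  unfolding is_subfield_def by (metis divide_inverse inverse_zero mult_zero_right)

lemma is_subfield_entry_field: "is_subfield (entry_field X)"
  unfolding entry_field_def field_adjoin_def is_subfield_def by auto

lemma mat_entries_subset_entry_field: "mat_entries X \<subseteq> entry_field X"
  unfolding entry_field_def field_adjoin_def by auto

lemma entry_field_least: "is_subfield K \<Longrightarrow> mat_entries X \<subseteq> K \<Longrightarrow> entry_field X \<subseteq> K"
  unfolding entry_field_def field_adjoin_def by auto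

lemma mat_entries_subset_iff:
  "mat_entries X \<subseteq> K \<longleftrightarrow> (\<forall>i < dim_row X. \<forall>j < dim_col X. X $$ (i, j) \<in> K)"
  unfolding mat_entries_def by auto

lemma mat_entries_one_subfield: "is_subfield K \<Longrightarrow> mat_entries (1\<^sub>m n) \<subseteq> K"
  unfolding mat_entries_subset_iff is_subfield_def by auto

lemma mat_entries_zero_subfield: "is_subfield K \<Longrightarrow> mat_entries (0\<^sub>m n m) \<subseteq> K"
  unfolding mat_entries_subset_iff is_subfield_def by auto

lemma mat_entries_add_subfield:
  "is_subfield K \<Longrightarrow> B \<in> carrier_mat (dim_row A) (dim_col A) \<Longrightarrow>
    mat_entries A \<subseteq> K \<Longrightarrow> mat_entries B \<subseteq> K \<Longrightarrow> mat_entries (A + B) \<subseteq> K"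
  unfolding mat_entries_subset_iff is_subfield_def by auto

lemma mat_entries_smult_subfield:
  "is_subfield K \<Longrightarrow> c \<in> K \<Longrightarrow> mat_entries A \<subseteq> K \<Longrightarrow> mat_entries (c \<cdot>\<^sub>m A) \<subseteq> K"
  unfolding mat_entries_subset_iff is_subfield_def by auto

lemma mat_entries_mult_subfield:
  assumes K: "is_subfield K" and dim: "dim_col A = dim_row B"
    and "mat_entries A \<subseteq> K" and "mat_entries B \<subseteq> K"
  shows "mat_entries (A * B) \<subseteq> K"
proof -
  have "(A * B) $$ (i, j) \<in> K" if "i < dim_row A" "j < dim_col B" for i j
    using that dim assms(3,4) unfolding mat_entries_subset_iff
    by (auto simp: scalar_prod_def intro!: subfield_sum[OF K] subfield_mult[OF K])
  then show ?thesis
    unfolding mat_entries_subset_iff by simp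
qed

lemma mat_entries_pow_subfield:
  assumes "is_subfield K" and "A \<in> carrier_mat n n" and "mat_entries A \<subseteq> K"
  shows "mat_entries (A ^\<^sub>m k) \<subseteq> K"
  by (induct k) (use assms in \<open>simp_all add: mat_entries_one_subfield mat_entries_mult_subfield\<close>)

definition poly_over :: "'a set \<Rightarrow> 'a :: zero poly \<Rightarrow> bool" where
  "poly_over K p \<longleftrightarrow> (\<forall>i. coeff p i \<in> K)"

lemma poly_over_pCons_iff: "poly_over K (pCons a p) \<longleftrightarrow> a \<in> K \<and> poly_over K p"
  unfolding poly_over_def by (metis coeff_pCons_0 coeff_pCons_Suc not0_implies_Suc)

context
  fixes K :: "complex set"
  assumes K: "is_subfield K"
begin

lemma poly_over_1: "poly_over K 1"
  using K unfolding poly_over_def is_subfield_def by (simp add: coeff_1)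

lemma poly_over_x: "poly_over K [:0, 1:]"
  using K unfolding is_subfield_def poly_over_def by (simp add: coeff_pCons split: nat.split)

lemma poly_over_add: "poly_over K p \<Longrightarrow> poly_over K q \<Longrightarrow> poly_over K (p + q)"
  using K unfolding poly_over_def is_subfield_def by simp

lemma poly_over_mult: "poly_over K p \<Longrightarrow> poly_over K q \<Longrightarrow> poly_over K (p * q)"
  unfolding poly_over_def coeff_mult
  by (intro allI subfield_sum[OF K]) (use K in \<open>simp add: is_subfield_def\<close>)

lemma poly_over_power: "poly_over K p \<Longrightarrow> poly_over K (p ^ k)"
  by (induct k) (simp_all add: poly_over_1 poly_over_mult)

lemma poly_over_sum: "(\<And>i. i \<in> I \<Longrightarrow> poly_over K (f i)) \<Longrightarrow> poly_over K (sum f I)"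
  unfolding poly_over_def coeff_sum by (auto intro: subfield_sum[OF K])

end

lemma x_power_mult_pCons:
  "[:0, 1:] ^ r * pCons a p = smult a ([:0, 1:] ^ r) + [:0, 1:] ^ Suc r * p"
proof -
  have "pCons a p = [:a:] + [:0, 1:] * p"
    by (simp add: poly_eq_iff coeff_pCons split: nat.split)
  then show ?thesis
    by (simp add: algebra_simps)
qed

lemma pow_mat_zero_ge:
  assumes "A \<in> carrier_mat n n" and "A ^\<^sub>m m = 0\<^sub>m n n" and "m \<le> j"
  shows "A ^\<^sub>m j = 0\<^sub>m n n"
  using assms(3) by (induct j rule: dec_induct) (use assms(1,2) in auto)

lemma poly_mat_x_power_mult_entries:
  assumes K: "is_subfield K" and A: "A \<in> carrier_mat n n" and "poly_over K p"
    and "\<And>j. r \<le> j \<Longrightarrow> mat_entries (A ^\<^sub>m j) \<subseteq> K"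
  shows "mat_entries (poly_mat ([:0, 1:] ^ r * p) A) \<subseteq> K"
  using assms(3,4)
proof (induct p arbitrary: r rule: pCons_induct)
  case 0
  then show ?case
    using A mat_entries_zero_subfield[OF K] by simp
next
  case (pCons a p)
  have "poly_mat ([:0, 1:] ^ r * pCons a p) A
      = a \<cdot>\<^sub>m A ^\<^sub>m r + poly_mat ([:0, 1:] ^ Suc r * p) A"
    using A by (simp add: x_power_mult_pCons poly_mat_add poly_mat_smult poly_mat_power)
  moreover have "mat_entries (poly_mat ([:0, 1:] ^ Suc r * p) A) \<subseteq> K"
    using pCons by (intro pCons.hyps(2)) (auto simp: poly_over_pCons_iff)
  moreover have "mat_entries (a \<cdot>\<^sub>m A ^\<^sub>m r) \<subseteq> K"
    using pCons.prems by (simp add: poly_over_pCons_iff mat_entries_smult_subfield[OF K])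
  ultimately show ?case
    using A by (simp add: mat_entries_add_subfield[OF K])
qed

lemma pow_mat_entries_descend:
  assumes K: "is_subfield K" and T: "T \<in> carrier_mat n n"
    and u: "poly_over K u" "coeff u 0 \<noteq> 0"
    and N: "mat_entries (poly_mat ([:0, 1:] * u) T) \<subseteq> K"
    and higher: "\<And>j. r < j \<Longrightarrow> mat_entries (T ^\<^sub>m j) \<subseteq> K"
  shows "mat_entries (T ^\<^sub>m r) \<subseteq> K"
proof -
  define c where "c = coeff (u ^ r) 0"
  obtain q where uq: "u ^ r = pCons c q"
    by (metis c_def pCons_cases coeff_pCons_0)
  have c_in_K: "c \<in> K"
    using poly_over_power[OF K u(1), of r] unfolding c_def poly_over_def by blast
  have c_nonzero: "c \<noteq> 0"
    using u(2) by (simp add: c_def coeff_0_power)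
  have q: "poly_over K q"
    using poly_over_power[OF K u(1), of r] by (simp add: uq poly_over_pCons_iff)
  define E where "E = poly_mat ([:0, 1:] ^ Suc r * q) T"
  have Ec: "E \<in> carrier_mat n n"
    unfolding E_def using T by (rule poly_mat_carrier)
  have "([:0, 1:] * u) ^ r = smult c ([:0, 1:] ^ r) + [:0, 1:] ^ Suc r * q"
    by (simp only: power_mult_distrib uq x_power_mult_pCons)
  then have Nr: "poly_mat ([:0, 1:] * u) T ^\<^sub>m r = c \<cdot>\<^sub>m T ^\<^sub>m r + E"
    unfolding E_def poly_mat_power[OF T, symmetric]
    by (simp add: poly_mat_add[OF T] poly_mat_smult[OF T] poly_mat_power[OF T] poly_mat_x[OF T])
  have Nr_entries: "mat_entries (poly_mat ([:0, 1:] * u) T ^\<^sub>m r) \<subseteq> K"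
    using mat_entries_pow_subfield[OF K poly_mat_carrier[OF T] N] .
  have E_entries: "mat_entries E \<subseteq> K"
    unfolding E_def using higher by (intro poly_mat_x_power_mult_entries[OF K T q]) simp
  have "(T ^\<^sub>m r) $$ (i, j) \<in> K" if "i < n" "j < n" for i j
  proof -
    have "(T ^\<^sub>m r) $$ (i, j) = ((poly_mat ([:0, 1:] * u) T ^\<^sub>m r) $$ (i, j) - E $$ (i, j)) / c"
      unfolding Nr using that T c_nonzero Ec by simp
    also have "\<dots> \<in> K"
      using Nr_entries E_entries that T Ec c_in_K
      by (intro subfield_divide[OF K] subfield_diff[OF K]) (auto simp: mat_entries_subset_iff)
    finally show ?thesis .
  qed
  then show ?thesis
    unfolding mat_entries_subset_iff pow_mat_dim_square[OF T] by blast
qed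

lemma nilpotent_entries_from_poly_mat:
  assumes K: "is_subfield K" and T: "T \<in> carrier_mat n n" and "nilpotent_mat T"
    and u: "poly_over K u" "coeff u 0 \<noteq> 0"
    and N: "mat_entries (poly_mat ([:0, 1:] * u) T) \<subseteq> K"
  shows "mat_entries T \<subseteq> K"
proof -
  obtain m where m: "T ^\<^sub>m m = 0\<^sub>m n n"
    using \<open>nilpotent_mat T\<close> T unfolding nilpotent_mat_def by auto
  have "mat_entries (T ^\<^sub>m r) \<subseteq> K" for r
  proof (induct r rule: nat_descend_induct[where n = m])
    case (base k)
    then show ?case
      using pow_mat_zero_ge[OF T m] mat_entries_zero_subfield[OF K] by simp
  next
    case (descend k)
    then show ?case
      using pow_mat_entries_descend[OF K T u N] by blast
  qed
  from this[of 1] show ?thesis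
    using T by simp
qed

lemma nilpotent_entries_from_unipotent_power:
  assumes K: "is_subfield K" and T: "T \<in> carrier_mat n n" and "nilpotent_mat T" and "k > 0"
    and entries: "mat_entries ((1\<^sub>m n + T) ^\<^sub>m k) \<subseteq> K"
  shows "mat_entries T \<subseteq> K"
proof -
  define u :: "complex poly" where "u = (\<Sum>i<k. (1 + [:0, 1:]) ^ i)"
  have xu: "(1 + [:0, 1:]) ^ k = 1 + [:0, 1:] * u"
    using power_diff_1_eq[of "1 + [:0, 1:] :: complex poly" k] by (simp add: u_def algebra_simps)
  have "(1\<^sub>m n + T) ^\<^sub>m k = poly_mat ((1 + [:0, 1:]) ^ k) T"
    by (simp only: poly_mat_power[OF T] poly_mat_add[OF T] poly_mat_1[OF T] poly_mat_x[OF T])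
  also have "\<dots> = 1\<^sub>m n + poly_mat ([:0, 1:] * u) T"
    by (simp only: xu poly_mat_add[OF T] poly_mat_1[OF T])
  finally have power: "(1\<^sub>m n + T) ^\<^sub>m k = 1\<^sub>m n + poly_mat ([:0, 1:] * u) T" .
  have "(poly_mat ([:0, 1:] * u) T) $$ (i, j) \<in> K" if "i < n" "j < n" for i j
  proof -
    have "(poly_mat ([:0, 1:] * u) T) $$ (i, j) = ((1\<^sub>m n + T) ^\<^sub>m k) $$ (i, j) - 1\<^sub>m n $$ (i, j)"
      unfolding power using that T by simp
    also have "\<dots> \<in> K"
      using entries mat_entries_one_subfield[OF K, of n] that T
      by (intro subfield_diff[OF K]) (auto simp: mat_entries_subset_iff)
    finally show ?thesis .
  qed
  then have N: "mat_entries (poly_mat ([:0, 1:] * u) T) \<subseteq> K"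
    using T by (simp add: mat_entries_subset_iff)
  have "poly_over K u"
    unfolding u_def by (intro poly_over_sum poly_over_power poly_over_add poly_over_1 poly_over_x K)
  moreover have "coeff u 0 = of_nat k"
    by (simp add: u_def coeff_sum coeff_0_power)
  ultimately show ?thesis
    using nilpotent_entries_from_poly_mat[OF K T \<open>nilpotent_mat T\<close> _ _ N] \<open>k > 0\<close> by simp
qed

lemma entry_field_pow_subset:
  assumes "A \<in> carrier_mat n n"
  shows "entry_field (A ^\<^sub>m k) \<subseteq> entry_field A"
  using assms
  by (intro entry_field_least is_subfield_entry_field mat_entries_pow_subfield
      mat_entries_subset_entry_field)

theorem lemma7p6:
  fixes M :: "complex mat" and n k :: nat
  assumes "M \<in> carrier_mat n n"
    and "unipotent_mat M"
    and "k > 0"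
  shows "entry_field M = entry_field (M ^\<^sub>m k)"
proof
  show "entry_field (M ^\<^sub>m k) \<subseteq> entry_field M"
    using assms(1) by (rule entry_field_pow_subset)
next
  let ?K = "entry_field (M ^\<^sub>m k)"
  obtain T where T: "T \<in> carrier_mat n n" "nilpotent_mat T" and M: "M = 1\<^sub>m n + T"
    using assms(1,2) unfolding unipotent_mat_def by auto
  have "mat_entries T \<subseteq> ?K"
    using nilpotent_entries_from_unipotent_power[OF is_subfield_entry_field T \<open>k > 0\<close>]
      mat_entries_subset_entry_field[of "M ^\<^sub>m k"] unfolding M .
  then have "mat_entries M \<subseteq> ?K"
    unfolding M using T(1)
    by (intro mat_entries_add_subfield is_subfield_entry_field mat_entries_one_subfield) auto
  then show "entry_field M \<subseteq> ?K"
    by (intro entry_field_least is_subfield_entry_field)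
qed

end
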